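(* Let $V_\theta$ be a real vector space of finite dimension $D\ge1$ and let $M\subset V_\theta\times[0,1]$ be a dichotomous item response hypersurface whose associated function $f:V_\theta\to[0,1]$ is not constant. Let $w,w'\in V_\theta$, and let $H_w,H_{w'}\subset V_\theta$ be affine hyperplanes (of dimension $D-1$) with $w\in H_w$, $w'\in H_{w'}$, such that $f$ is constant on $H_w$ and constant on $H_{w'}$. Then $H_w$ and $H_{w'}$ are parallel (i.e. they are translates of the same linear subspace).
   Context: A dichotomous item response hypersurface (IRHS) is a $D=\dim V_\theta$ dimensional smooth submanifold $M$ of $V_\theta\times[0,1]$ such that for any two vectors $v,w\in V_\theta$, the intersection of $(w+\mathbb{R}\cdot v)\times[0,1]$ with $M$ is the graph of a monotonic function $w+\mathbb{R}\cdot v\to[0,1]$, where $w+\mathbb{R}\cdot v=\{w+\lambda v:\lambda\in\mathbb{R}\}$. A function $g:w+\mathbb{R}\cdot v\to[0,1]$ is monotonic if either $g(w+\lambda v)\le g(w+\mu v)$ for all $\lambda\le\mu$, or $g(w+\lambda v)\ge g(w+\mu v)$ for all $\lambda\le\mu$. Taking $v=0$ shows $M$ is the graph of a function $f:V_\theta\to[0,1]$, the associated function. *)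

theory Defs
  imports "HOL-Analysis.Analysis"
begin

text \<open>C-infinity smoothness on a set (intended for open sets): f is continuous,
  Frechet differentiable at every point, and every directional derivative
  x -> f' x v is again smooth.\<close>
coinductive smooth_on :: "'a::real_normed_vector set \<Rightarrow> ('a \<Rightarrow> 'b::real_normed_vector) \<Rightarrow> bool" where
  "\<lbrakk> continuous_on S f;
     \<And>x. x \<in> S \<Longrightarrow> (f has_derivative f' x) (at x);
     \<And>v. smooth_on S (\<lambda>x. f' x v) \<rbrakk> \<Longrightarrow> smooth_on S f"

definition smooth_submanifold :: "nat \<Rightarrow> 'e::euclidean_space set \<Rightarrow> bool" where
  "smooth_submanifold k M \<longleftrightarrow>
     (\<forall>p\<in>M. \<exists>U W (\<phi>::'e \<Rightarrow> 'e) \<psi> L.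
        open U \<and> p \<in> U \<and> open W \<and>
        smooth_on U \<phi> \<and> smooth_on W \<psi> \<and> \<phi> ` U = W \<and>
        (\<forall>x\<in>U. \<psi> (\<phi> x) = x) \<and> (\<forall>y\<in>W. \<phi> (\<psi> y) = y) \<and>
        subspace L \<and> dim L = k \<and> \<phi> ` (M \<inter> U) = W \<inter> L)"

definition line_through :: "'a::real_vector \<Rightarrow> 'a \<Rightarrow> 'a set" where
  "line_through w v = {w + t *\<^sub>R v | t. True}"

definition IRHS :: "('a::euclidean_space \<times> real) set \<Rightarrow> bool" where
  "IRHS M \<longleftrightarrow>
     M \<subseteq> UNIV \<times> {0..1} \<and>
     smooth_submanifold DIM('a) M \<and>
     (\<forall>v w. \<exists>g::'a \<Rightarrow> real.
        M \<inter> (line_through w v \<times> {0..1}) = {(x, g x) | x. x \<in> line_through w v} \<and>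
        ((\<forall>s t. s \<le> t \<longrightarrow> g (w + s *\<^sub>R v) \<le> g (w + t *\<^sub>R v)) \<or>
         (\<forall>s t. s \<le> t \<longrightarrow> g (w + s *\<^sub>R v) \<ge> g (w + t *\<^sub>R v))))"

end

theory Submission
  imports Defs
begin

text \<open>Along every line the associated function of an IRHS is monotone, so if it takes the
  value c at two points it takes the value c at their midpoint. Two non-parallel hyperplanes
  meet, so f has the same constant value c on both of them; moreover every point is the
  midpoint of a point of the one and a point of the other. Hence f would be constant.\<close>

lemma IRHS_graph_monotone_on_line:
  fixes M :: "('a::euclidean_space \<times> real) set" and f :: "'a \<Rightarrow> real"
  assumes "IRHS M" and "M = {(x, f x) | x. True}"
  shows "mono (\<lambda>t. f (w + t *\<^sub>R v)) \<or> antimono (\<lambda>t. f (w + t *\<^sub>R v))"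
proof -
  obtain g :: "'a \<Rightarrow> real" where
    g: "M \<inter> (line_through w v \<times> {0..1}) = {(x, g x) | x. x \<in> line_through w v}" and
    g_mono: "(\<forall>s t. s \<le> t \<longrightarrow> g (w + s *\<^sub>R v) \<le> g (w + t *\<^sub>R v)) \<or>
             (\<forall>s t. s \<le> t \<longrightarrow> g (w + s *\<^sub>R v) \<ge> g (w + t *\<^sub>R v))"
    using assms(1) unfolding IRHS_def by blast
  have f_eq_g: "f (w + t *\<^sub>R v) = g (w + t *\<^sub>R v)" for t
  proof -
    let ?x = "w + t *\<^sub>R v"
    have "(?x, f ?x) \<in> M" using assms(2) by blast
    moreover have "M \<subseteq> UNIV \<times> {0..1}" using assms(1) unfolding IRHS_def by blast
    moreover have "?x \<in> line_through w v" unfolding line_through_def by blast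
    ultimately have "(?x, f ?x) \<in> {(x, g x) | x. x \<in> line_through w v}" using g by blast
    then show ?thesis by auto
  qed
  show ?thesis
    using g_mono unfolding mono_def antimono_def f_eq_g by blast
qed

lemma IRHS_graph_midpoint:
  fixes M :: "('a::euclidean_space \<times> real) set" and f :: "'a \<Rightarrow> real"
  assumes "IRHS M" and "M = {(x, f x) | x. True}" and "f p = c" and "f q = c"
  shows "f (midpoint p q) = c"
proof -
  let ?h = "\<lambda>t. f (p + t *\<^sub>R (q - p))"
  have "?h (1/2) = c"
    using IRHS_graph_monotone_on_line[OF assms(1,2), of p "q - p"]
  proof
    assume "mono ?h"
    then show ?thesis using monoD[of ?h 0 "1/2"] monoD[of ?h "1/2" 1] assms(3,4) by simp
  next
    assume "antimono ?h"
    then show ?thesis using antimonoD[of ?h 0 "1/2"] antimonoD[of ?h "1/2" 1] assms(3,4) by simp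
  qed
  moreover have "p + (1/2) *\<^sub>R (q - p) = midpoint p q"
  proof -
    have "p + (1/2) *\<^sub>R (q - p) = (1/2) *\<^sub>R (p + p) + (1/2) *\<^sub>R (q - p)" by simp
    also have "\<dots> = (1/2) *\<^sub>R (p + p + (q - p))" by (simp only: scaleR_add_right)
    also have "\<dots> = midpoint p q" by (simp add: midpoint_def)
    finally show ?thesis .
  qed
  ultimately show ?thesis by simp
qed

lemma inner_system_solvable:
  fixes a b :: "'a::real_inner"
  assumes "a \<noteq> 0" and "\<nexists>k. b = k *\<^sub>R a"
  shows "\<exists>p. a \<bullet> p = \<alpha> \<and> b \<bullet> p = \<gamma>"
proof -
  \<comment> \<open>Gram-Schmidt: b' is orthogonal to a, and nonzero since b is not a multiple of a.\<close>
  define b' where "b' = b - ((a \<bullet> b) / (a \<bullet> a)) *\<^sub>R a"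
  have aa: "a \<bullet> a > 0" using assms(1) by simp
  have "b' \<noteq> 0" using assms(2) unfolding b'_def by (metis eq_iff_diff_eq_0)
  then have b'_pos: "b' \<bullet> b' > 0" by simp
  have ab': "a \<bullet> b' = 0" unfolding b'_def using aa by (simp add: inner_diff_right)
  have bb': "b \<bullet> b' = b' \<bullet> b'"
    using ab' unfolding b'_def by (simp add: inner_diff_left inner_commute)
  define t where "t = (\<gamma> - \<alpha> * (a \<bullet> b) / (a \<bullet> a)) / (b' \<bullet> b')"
  define p where "p = (\<alpha> / (a \<bullet> a)) *\<^sub>R a + t *\<^sub>R b'"
  have "a \<bullet> p = \<alpha>" unfolding p_def using aa ab' by (simp add: inner_add_right)
  moreover have "b \<bullet> p = \<gamma>" unfolding p_def t_def using aa b'_pos bb'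
    by (simp add: inner_add_right inner_commute field_simps)
  ultimately show ?thesis by blast
qed

lemma midpoint_of_nonparallel_hyperplanes:
  fixes a b :: "'a::real_inner"
  assumes "a \<noteq> 0" and "\<nexists>k. b = k *\<^sub>R a"
  shows "\<exists>y z. a \<bullet> y = \<alpha> \<and> b \<bullet> z = \<beta> \<and> midpoint y z = x"
proof -
  obtain y where y: "a \<bullet> y = \<alpha>" "b \<bullet> y = 2 * (b \<bullet> x) - \<beta>"
    using inner_system_solvable[OF assms] by blast
  have "b \<bullet> (2 *\<^sub>R x - y) = \<beta>" using y by (simp add: inner_diff_right)
  moreover have "midpoint y (2 *\<^sub>R x - y) = x" by (simp add: midpoint_def algebra_simps)
  ultimately show ?thesis using y by blast
qed

lemma hyperplane_eq_translate:
  fixes a :: "'a::real_inner"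
  assumes "a \<noteq> 0"
  shows "{x. a \<bullet> x = \<alpha>} = (\<lambda>x. (\<alpha> / (a \<bullet> a)) *\<^sub>R a + x) ` {x. a \<bullet> x = 0}"
proof (intro set_eqI iffI)
  have aa: "a \<bullet> a \<noteq> 0" using assms by simp
  fix x assume "x \<in> {x. a \<bullet> x = \<alpha>}"
  then have "x = (\<alpha> / (a \<bullet> a)) *\<^sub>R a + (x - (\<alpha> / (a \<bullet> a)) *\<^sub>R a)"
    and "a \<bullet> (x - (\<alpha> / (a \<bullet> a)) *\<^sub>R a) = 0" using aa by (auto simp: inner_diff_right)
  then show "x \<in> (\<lambda>x. (\<alpha> / (a \<bullet> a)) *\<^sub>R a + x) ` {x. a \<bullet> x = 0}" by blast
next
  fix x assume "x \<in> (\<lambda>x. (\<alpha> / (a \<bullet> a)) *\<^sub>R a + x) ` {x. a \<bullet> x = 0}"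
  then show "x \<in> {x. a \<bullet> x = \<alpha>}" using assms by (auto simp: inner_add_right)
qed

lemma parallel_hyperplanes_translates:
  fixes a :: "'a::real_inner"
  assumes "a \<noteq> 0" and "k \<noteq> 0"
  shows "\<exists>L. subspace L \<and> (\<exists>c. {x. a \<bullet> x = \<alpha>} = (\<lambda>x. c + x) ` L)
                      \<and> (\<exists>d. {x. (k *\<^sub>R a) \<bullet> x = \<beta>} = (\<lambda>x. d + x) ` L)"
proof (intro exI conjI)
  show "subspace {x. a \<bullet> x = 0}" by (auto simp: subspace_def inner_add_right)
  show "{x. a \<bullet> x = \<alpha>} = (\<lambda>x. (\<alpha> / (a \<bullet> a)) *\<^sub>R a + x) ` {x. a \<bullet> x = 0}"
    by (rule hyperplane_eq_translate[OF assms(1)])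
  have "{x. (k *\<^sub>R a) \<bullet> x = \<beta>} = {x. a \<bullet> x = \<beta> / k}"
    using assms(2) by (simp add: eq_divide_eq mult.commute)
  then show "{x. (k *\<^sub>R a) \<bullet> x = \<beta>} = (\<lambda>x. (\<beta> / k / (a \<bullet> a)) *\<^sub>R a + x) ` {x. a \<bullet> x = 0}"
    using hyperplane_eq_translate[OF assms(1), of "\<beta> / k"] by (rule trans)
qed

lemma affine_hyperplane_normal_form:
  fixes H :: "'a::euclidean_space set"
  assumes "affine H" and "aff_dim H = int DIM('a) - 1"
  obtains a \<alpha> where "a \<noteq> 0" and "H = {x. a \<bullet> x = \<alpha>}"
proof -
  obtain a \<alpha> where "a \<noteq> 0" and "affine hull H = {x. a \<bullet> x = \<alpha>}"
    using assms(2) aff_dim_eq_hyperplane[of H] by auto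
  moreover have "affine hull H = H" using assms(1) by (simp add: affine_hull_eq)
  ultimately show ?thesis using that by simp
qed

theorem lemma5:
  fixes M :: "('a::euclidean_space \<times> real) set"
    and f :: "'a \<Rightarrow> real"
    and w w' :: 'a
    and H H' :: "'a set"
  assumes "IRHS M"
    and "M = {(x, f x) | x. True}"
    and "\<not> (\<exists>c. \<forall>x. f x = c)"
    and "affine H" and "aff_dim H = int DIM('a) - 1" and "w \<in> H"
    and "affine H'" and "aff_dim H' = int DIM('a) - 1" and "w' \<in> H'"
    and "\<exists>c. \<forall>x\<in>H. f x = c"
    and "\<exists>c. \<forall>x\<in>H'. f x = c"
  shows "\<exists>L. subspace L \<and> (\<exists>a. H = (\<lambda>x. a + x) ` L) \<and> (\<exists>b. H' = (\<lambda>x. b + x) ` L)"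
proof -
  obtain a \<alpha> where a: "a \<noteq> 0" and H: "H = {x. a \<bullet> x = \<alpha>}"
    using affine_hyperplane_normal_form[OF assms(4,5)] .
  obtain b \<beta> where b: "b \<noteq> 0" and H': "H' = {x. b \<bullet> x = \<beta>}"
    using affine_hyperplane_normal_form[OF assms(7,8)] .
  show ?thesis
  proof (cases "\<exists>k. b = k *\<^sub>R a")
    case True
    then obtain k where k: "b = k *\<^sub>R a" and "k \<noteq> 0" using b by auto
    show ?thesis
      using parallel_hyperplanes_translates[OF a \<open>k \<noteq> 0\<close>] unfolding H H' k .
  next
    case False
    obtain c c' where c: "\<forall>x\<in>H. f x = c" and c': "\<forall>x\<in>H'. f x = c'"
      using assms(10,11) by blast
    obtain r where "a \<bullet> r = \<alpha>" "b \<bullet> r = \<beta>" using inner_system_solvable[OF a False] by blast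
    then have "c' = c" using c c' H H' by auto
    have "f x = c" for x
    proof -
      obtain y z where "a \<bullet> y = \<alpha>" "b \<bullet> z = \<beta>" and x: "x = midpoint y z"
        using midpoint_of_nonparallel_hyperplanes[OF a False] by metis
      then have "f y = c" and "f z = c" using c c' \<open>c' = c\<close> H H' by auto
      then show ?thesis unfolding x by (rule IRHS_graph_midpoint[OF assms(1,2)])
    qed
    with assms(3) show ?thesis by blast
  qed
qed

end
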